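(* For $M\in\Lambda$, the following are equivalent: (1) $M$ is in $\mathsf v$-normal form; (2) every $t\in\mathcal T(M)$ is in $\beta_r\sigma$-normal form, i.e. contains no subterm that is a $\beta_r$-, $\sigma_1$- or $\sigma_3$-redex.
   Context: $\lambda$-terms and values are $M,N::=V\mid MN$, $V::=x\mid\lambda x.M$, up to $\alpha$-conversion. Rules: $(\beta_v)$ $(\lambda x.M)V\to M\{x:=V\}$ if $V$ is a value; $(\sigma_1)$ $(\lambda x.M)NP\to(\lambda x.MP)N$ if $x\notin\mathrm{FV}(P)$; $(\sigma_3)$ $V((\lambda x.M)N)\to(\lambda x.VM)N$ if $V$ is a value and $x\notin\mathrm{FV}(V)$. $M$ is in $\mathsf v$-normal form if it contains no redex of these three kinds. Resource calculus: resource values $v::=x\mid\lambda x.t$; simple terms $s,t::=st\mid[v_1,\dots,v_k]$ ($k\ge0$, bags are finite multisets); $[x^n]$ is the bag of $n$ copies of $x$. Redexes: a $\beta_r$-redex is $[\lambda x.t][v_1,\dots,v_n]$; a $\sigma_1$-redex is $[\lambda x.t]s_1s_2$ (with $x\notin\mathrm{FV}(s_1)$ after renaming); a $\sigma_3$-redex is $[v]([\lambda x.t]s)$ with $v$ a resource value (with $x\notin\mathrm{FV}(v)$ after renaming). Taylor expansion: $\mathcal T(x)=\{[x^n]\mid n\ge0\}$, $\mathcal T(\lambda x.N)=\{[\lambda x.t_1,\dots,\lambda x.t_n]\mid n\ge0,\ t_i\in\mathcal T(N)\}$, $\mathcal T(PQ)=\{st\mid s\in\mathcal T(P),t\in\mathcal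 T(Q)\}$. *)

theory Defs
  imports Main "HOL-Library.Multiset"
begin

datatype lterm = Var nat | Lam lterm | App lterm lterm

fun is_value :: "lterm \<Rightarrow> bool" where
  "is_value (Var _) = True"
| "is_value (Lam _) = True"
| "is_value (App _ _) = False"

inductive lsub :: "lterm \<Rightarrow> lterm \<Rightarrow> bool" where
  lsub_refl: "lsub M M"
| lsub_lam: "lsub N M \<Longrightarrow> lsub N (Lam M)"
| lsub_app1: "lsub N M \<Longrightarrow> lsub N (App M P)"
| lsub_app2: "lsub N P \<Longrightarrow> lsub N (App M P)"

text \<open>Redexes. The freshness side conditions of sigma1/sigma3 can always be
  met by alpha-renaming, so on alpha-classes only the shape matters.\<close>
definition beta_v_redex :: "lterm \<Rightarrow> bool" where
  "beta_v_redex R \<longleftrightarrow> (\<exists>M V. R = App (Lam M) V \<and> is_value V)"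

definition sigma1_redex :: "lterm \<Rightarrow> bool" where
  "sigma1_redex R \<longleftrightarrow> (\<exists>M N P. R = App (App (Lam M) N) P)"

definition sigma3_redex :: "lterm \<Rightarrow> bool" where
  "sigma3_redex R \<longleftrightarrow> (\<exists>V M N. R = App V (App (Lam M) N) \<and> is_value V)"

definition v_normal :: "lterm \<Rightarrow> bool" where
  "v_normal M \<longleftrightarrow>
     (\<forall>R. lsub R M \<longrightarrow> \<not> beta_v_redex R \<and> \<not> sigma1_redex R \<and> \<not> sigma3_redex R)"

datatype rterm = RApp rterm rterm | Bag "rval multiset"
     and rval = RVar nat | RLam rterm

inductive rsub :: "rterm \<Rightarrow> rterm \<Rightarrow> bool" where
  rsub_refl: "rsub s s"
| rsub_app1: "rsub s s1 \<Longrightarrow> rsub s (RApp s1 s2)"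
| rsub_app2: "rsub s s2 \<Longrightarrow> rsub s (RApp s1 s2)"
| rsub_bag: "RLam t \<in># b \<Longrightarrow> rsub s t \<Longrightarrow> rsub s (Bag b)"

definition beta_r_redex :: "rterm \<Rightarrow> bool" where
  "beta_r_redex r \<longleftrightarrow> (\<exists>t b. r = RApp (Bag {#RLam t#}) (Bag b))"

definition rsigma1_redex :: "rterm \<Rightarrow> bool" where
  "rsigma1_redex r \<longleftrightarrow> (\<exists>t s1 s2. r = RApp (RApp (Bag {#RLam t#}) s1) s2)"

definition rsigma3_redex :: "rterm \<Rightarrow> bool" where
  "rsigma3_redex r \<longleftrightarrow> (\<exists>v t s. r = RApp (Bag {#v#}) (RApp (Bag {#RLam t#}) s))"

definition beta_r_sigma_normal :: "rterm \<Rightarrow> bool" where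
  "beta_r_sigma_normal s \<longleftrightarrow>
     (\<forall>r. rsub r s \<longrightarrow> \<not> beta_r_redex r \<and> \<not> rsigma1_redex r \<and> \<not> rsigma3_redex r)"

fun taylor :: "lterm \<Rightarrow> rterm set" where
  "taylor (Var x) = {Bag (replicate_mset n (RVar x)) | n. True}"
| "taylor (Lam N) = {Bag (mset (map RLam ts)) | ts. set ts \<subseteq> taylor N}"
| "taylor (App P Q) = {RApp s t | s t. s \<in> taylor P \<and> t \<in> taylor Q}"

end

theory Submission
  imports Defs
begin

text \<open>Taylor expansion commutes with taking subterms: every subterm of some \<open>t \<in> \<T>(M)\<close>
  lies in \<open>\<T>(R)\<close> for a subterm \<open>R\<close> of \<open>M\<close>, and conversely, because no \<open>\<T>(M)\<close> is empty.
  Moreover a term is a redex of a given kind iff some element of its expansion is a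
  resource redex of the same kind: a resource redex needs singleton bags, which every
  expansion of an abstraction (and of a value) provides, and the argument of a
  \<open>\<beta>\<^sub>r\<close>-redex is a bag exactly when the argument of the \<open>\<lambda>\<close>-term is a value.\<close>

lemma taylor_nonempty: "taylor M \<noteq> {}"
proof (induction M)
  case (Lam N)
  have "Bag (mset (map RLam [])) \<in> taylor (Lam N)" by auto
  then show ?case by blast
qed auto

lemma RApp_in_taylor_iff:
  "RApp s t \<in> taylor M \<longleftrightarrow> (\<exists>P Q. M = App P Q \<and> s \<in> taylor P \<and> t \<in> taylor Q)"
  by (cases M) auto

lemma Bag_in_taylor_imp_value: "Bag b \<in> taylor M \<Longrightarrow> is_value M"
  by (cases M) auto

lemma RLam_in_Bag_in_taylor:
  assumes "Bag b \<in> taylor M" and "RLam t \<in># b"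
  obtains N where "M = Lam N" and "t \<in> taylor N"
  using assms by (cases M) (auto split: if_splits)

lemma single_RLam_in_taylor_iff:
  "Bag {#RLam t#} \<in> taylor M \<longleftrightarrow> (\<exists>N. M = Lam N \<and> t \<in> taylor N)"
proof
  assume "Bag {#RLam t#} \<in> taylor M"
  then show "\<exists>N. M = Lam N \<and> t \<in> taylor N"
    by (elim RLam_in_Bag_in_taylor) auto
next
  assume "\<exists>N. M = Lam N \<and> t \<in> taylor N"
  then obtain N where "M = Lam N" and "set [t] \<subseteq> taylor N" by auto
  then show "Bag {#RLam t#} \<in> taylor M"
    by (auto intro!: exI[of _ "[t]"])
qed

lemma value_has_singleton_bag:
  assumes "is_value V"
  obtains v where "Bag {#v#} \<in> taylor V"
proof (cases V)
  case (Var x)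
  have "{#RVar x#} = replicate_mset 1 (RVar x)" by simp
  then have "Bag {#RVar x#} \<in> taylor V" unfolding Var taylor.simps by blast
  then show ?thesis by (rule that)
next
  case (Lam N)
  obtain t where "t \<in> taylor N" using taylor_nonempty by blast
  then show ?thesis using that Lam single_RLam_in_taylor_iff by blast
qed (use assms in simp)

lemma rsub_taylor_imp_lsub:
  "rsub r t \<Longrightarrow> t \<in> taylor M \<Longrightarrow> \<exists>R. lsub R M \<and> r \<in> taylor R"
proof (induction arbitrary: M rule: rsub.induct)
  case (rsub_refl s)
  then show ?case using lsub_refl by blast
next
  case (rsub_app1 s s1 s2)
  then show ?case using lsub_app1 by (metis RApp_in_taylor_iff)
next
  case (rsub_app2 s s2 s1)
  then show ?case using lsub_app2 by (metis RApp_in_taylor_iff)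
next
  case (rsub_bag t b s)
  then obtain N where "M = Lam N" and "t \<in> taylor N" by (elim RLam_in_Bag_in_taylor)
  then show ?case using rsub_bag.IH lsub_lam by blast
qed

lemma lsub_imp_rsub_taylor:
  "lsub R M \<Longrightarrow> r \<in> taylor R \<Longrightarrow> \<exists>t \<in> taylor M. rsub r t"
proof (induction rule: lsub.induct)
  case (lsub_refl M)
  then show ?case using rsub_refl by blast
next
  case (lsub_lam N M)
  then obtain t where "t \<in> taylor M" and "rsub r t" by blast
  then have "Bag {#RLam t#} \<in> taylor (Lam M)" and "rsub r (Bag {#RLam t#})"
    by (auto simp: single_RLam_in_taylor_iff simp del: taylor.simps intro: rsub_bag)
  then show ?case by blast
next
  case (lsub_app1 N M P)
  then obtain t where "t \<in> taylor M" and "rsub r t" by blast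
  moreover obtain u where "u \<in> taylor P" using taylor_nonempty by blast
  ultimately show ?case by (auto intro: rsub_app1)
next
  case (lsub_app2 N P M)
  then obtain t where "t \<in> taylor P" and "rsub r t" by blast
  moreover obtain u where "u \<in> taylor M" using taylor_nonempty by blast
  ultimately show ?case by (auto intro: rsub_app2)
qed

lemma rsub_taylor_iff_lsub:
  "(\<exists>t \<in> taylor M. rsub r t) \<longleftrightarrow> (\<exists>R. lsub R M \<and> r \<in> taylor R)"
  using rsub_taylor_imp_lsub lsub_imp_rsub_taylor by blast

lemma beta_v_redex_iff_taylor:
  "beta_v_redex R \<longleftrightarrow> (\<exists>r \<in> taylor R. beta_r_redex r)"
proof
  assume "beta_v_redex R"
  then obtain M V where R: "R = App (Lam M) V" and "is_value V"
    by (auto simp: beta_v_redex_def)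
  obtain t where "t \<in> taylor M" using taylor_nonempty by blast
  moreover obtain v where "Bag {#v#} \<in> taylor V" using \<open>is_value V\<close> by (rule value_has_singleton_bag)
  ultimately have "RApp (Bag {#RLam t#}) (Bag {#v#}) \<in> taylor R"
    by (auto simp: R RApp_in_taylor_iff single_RLam_in_taylor_iff simp del: taylor.simps)
  then show "\<exists>r \<in> taylor R. beta_r_redex r" by (auto simp: beta_r_redex_def)
next
  assume "\<exists>r \<in> taylor R. beta_r_redex r"
  then show "beta_v_redex R"
    by (auto simp: beta_r_redex_def beta_v_redex_def RApp_in_taylor_iff
        single_RLam_in_taylor_iff) (metis Bag_in_taylor_imp_value)
qed

lemma sigma1_redex_iff_taylor:
  "sigma1_redex R \<longleftrightarrow> (\<exists>r \<in> taylor R. rsigma1_redex r)"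
proof
  assume "sigma1_redex R"
  then obtain M N P where R: "R = App (App (Lam M) N) P" by (auto simp: sigma1_redex_def)
  obtain t s1 s2 where "t \<in> taylor M" and "s1 \<in> taylor N" and "s2 \<in> taylor P"
    using taylor_nonempty by blast
  then have "RApp (RApp (Bag {#RLam t#}) s1) s2 \<in> taylor R"
    by (auto simp: R RApp_in_taylor_iff single_RLam_in_taylor_iff simp del: taylor.simps)
  then show "\<exists>r \<in> taylor R. rsigma1_redex r" by (auto simp: rsigma1_redex_def)
next
  assume "\<exists>r \<in> taylor R. rsigma1_redex r"
  then show "sigma1_redex R"
    by (auto simp: rsigma1_redex_def sigma1_redex_def RApp_in_taylor_iff single_RLam_in_taylor_iff)
qed

lemma sigma3_redex_iff_taylor:
  "sigma3_redex R \<longleftrightarrow> (\<exists>r \<in> taylor R. rsigma3_redex r)"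
proof
  assume "sigma3_redex R"
  then obtain V M N where R: "R = App V (App (Lam M) N)" and "is_value V"
    by (auto simp: sigma3_redex_def)
  obtain t s where "t \<in> taylor M" and "s \<in> taylor N" using taylor_nonempty by blast
  moreover obtain v where "Bag {#v#} \<in> taylor V" using \<open>is_value V\<close> by (rule value_has_singleton_bag)
  ultimately have "RApp (Bag {#v#}) (RApp (Bag {#RLam t#}) s) \<in> taylor R"
    by (auto simp: R RApp_in_taylor_iff single_RLam_in_taylor_iff simp del: taylor.simps)
  then show "\<exists>r \<in> taylor R. rsigma3_redex r" by (auto simp: rsigma3_redex_def)
next
  assume "\<exists>r \<in> taylor R. rsigma3_redex r"
  then show "sigma3_redex R"
    by (auto simp: rsigma3_redex_def sigma3_redex_def RApp_in_taylor_iff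
        single_RLam_in_taylor_iff) (metis Bag_in_taylor_imp_value)
qed

theorem lemma3p13:
  fixes M :: lterm
  shows "v_normal M \<longleftrightarrow> (\<forall>t \<in> taylor M. beta_r_sigma_normal t)"
proof -
  have "v_normal M \<longleftrightarrow> (\<forall>R r. lsub R M \<and> r \<in> taylor R \<longrightarrow>
      \<not> beta_r_redex r \<and> \<not> rsigma1_redex r \<and> \<not> rsigma3_redex r)"
    unfolding v_normal_def beta_v_redex_iff_taylor sigma1_redex_iff_taylor sigma3_redex_iff_taylor
    by blast
  also have "\<dots> \<longleftrightarrow> (\<forall>r. (\<exists>t \<in> taylor M. rsub r t) \<longrightarrow>
      \<not> beta_r_redex r \<and> \<not> rsigma1_redex r \<and> \<not> rsigma3_redex r)"
    unfolding rsub_taylor_iff_lsub by blast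
  also have "\<dots> \<longleftrightarrow> (\<forall>t \<in> taylor M. beta_r_sigma_normal t)"
    unfolding beta_r_sigma_normal_def by blast
  finally show ?thesis .
qed

end
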